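(* Let $\mathcal{X}\subseteq\mathbb{R}^{n_x}$, $\mathcal{U}\subseteq\mathbb{R}^{n_u}$ non-empty, compact and convex, and $\mathcal{E}\subseteq\mathbb{R}^{n_x}$. Let $f(x,u)=f_x(x)+f_u(x)u$ and $\hat f(x,u)=\hat f_x(x)+\hat f_u(x)u$ with $f_x,\hat f_x:\mathcal{X}\to\mathbb{R}^{n_x}$, $f_u,\hat f_u:\mathcal{X}\to\mathbb{R}^{n_x\times n_u}$, and assume $f(x,u)-\hat f(x,u)\in\mathcal{E}$ for all $(x,u)\in\mathcal{X}\times\mathcal{U}$. Let $\pi:\mathcal{X}\times\mathcal{E}\to\mathcal{U}$ be of the form $\pi(x,e)=\pi_x(x)+\pi_e(x)e$ with $\pi_x:\mathcal{X}\to\mathbb{R}^{n_u}$, $\pi_e:\mathcal{X}\to\mathbb{R}^{n_u\times n_x}$. Then for every $x\in\mathcal{X}$, the set of $u\in\mathcal{U}$ satisfying $$u=\pi_x(x)+\pi_e(x)\Big(f_x(x)-\hat f_x(x)+\big(f_u(x)-\hat f_u(x)\big)u\Big)$$ is non-empty, coincides with the set of solutions of $u=\pi(x,f(x,u)-\hat f(x,u))$, $u\in\mathcal{U}$, and is convex (so a solution is obtained by a convex feasibility program). If moreover $\mathcal{U}$ is a polytope, this feasibility problem is a linear program.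
   Context: The equation $u=\pi(x,f(x,u)-\hat f(x,u))$, $u\in\mathcal{U}$, is the concretization problem for the informed policy $\pi$ at state $x$. *)

theory Defs
  imports "HOL-Analysis.Analysis"
begin

definition aff_dyn ::
  "(real^'nx \<Rightarrow> real^'nx) \<Rightarrow> (real^'nx \<Rightarrow> real^'nu^'nx) \<Rightarrow> real^'nx \<Rightarrow> real^'nu \<Rightarrow> real^'nx"
  where "aff_dyn fx fu x u = fx x + fu x *v u"

definition aff_pol ::
  "(real^'nx \<Rightarrow> real^'nu) \<Rightarrow> (real^'nx \<Rightarrow> real^'nx^'nu) \<Rightarrow> real^'nx \<Rightarrow> real^'nx \<Rightarrow> real^'nu"
  where "aff_pol px pe x e = px x + pe x *v e"

end

theory Submission
  imports Defs
begin

(* For fixed x the closed loop u \<mapsto> \<pi>(x, f(x,u) - f_hat(x,u)) is an affine map of U into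
   itself, since the error lies in E and \<pi> maps E into U. By Brouwer it has a fixed point in U,
   and the fixed points of an affine map form an affine set; so the solution set is U intersected
   with an affine set: convex, and a polyhedron whenever U is a polytope. *)

lemma affine_fixpoints_affine_map:
  assumes "linear f"
  shows "affine {u. c + f u = u}"
  unfolding affine_def
proof (intro ballI allI impI)
  fix y z :: 'a and a b :: real
  assume y: "y \<in> {u. c + f u = u}" and z: "z \<in> {u. c + f u = u}" and ab: "a + b = 1"
  have "c + f (a *\<^sub>R y + b *\<^sub>R z) = (a + b) *\<^sub>R c + a *\<^sub>R f y + b *\<^sub>R f z"
    by (simp add: ab linear_add[OF assms] linear_scale[OF assms])
  also have "\<dots> = a *\<^sub>R (c + f y) + b *\<^sub>R (c + f z)"
    by (simp add: algebra_simps)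
  finally show "a *\<^sub>R y + b *\<^sub>R z \<in> {u. c + f u = u}"
    using y z by simp
qed

lemma affine_self_map_has_fixpoint:
  fixes f :: "'a::euclidean_space \<Rightarrow> 'a"
  assumes "compact S" "convex S" "S \<noteq> {}" "linear f"
    and maps_to: "\<And>u. u \<in> S \<Longrightarrow> c + f u \<in> S"
  obtains u where "u \<in> S" "c + f u = u"
proof (rule brouwer[OF assms(1-3)])
  show "continuous_on S (\<lambda>u. c + f u)"
    using \<open>linear f\<close>
    by (intro continuous_intros linear_continuous_on) (simp add: linear_conv_bounded_linear)
qed (use maps_to that in auto)

lemma matrix_affine_compose:
  fixes P :: "real^'n^'m" and D :: "real^'k^'n"
  shows "p + P *v (d + D *v u) = (p + P *v d) + (P ** D) *v u"
  by (simp add: matrix_vector_right_distrib matrix_vector_mul_assoc add.assoc)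

lemma aff_pol_aff_dyn_diff:
  "aff_pol px pe x (aff_dyn fx fu x u - aff_dyn fhx fhu x u)
     = px x + pe x *v (fx x - fhx x + (fu x - fhu x) *v u)"
  by (simp add: aff_pol_def aff_dyn_def matrix_vector_mult_diff_rdistrib algebra_simps)

theorem theorem4:
  fixes X :: "(real^'nx) set" and U :: "(real^'nu) set" and E :: "(real^'nx) set"
    and fx fhx :: "real^'nx \<Rightarrow> real^'nx"
    and fu fhu :: "real^'nx \<Rightarrow> real^'nu^'nx"
    and px :: "real^'nx \<Rightarrow> real^'nu"
    and pe :: "real^'nx \<Rightarrow> real^'nx^'nu"
  assumes X: "X \<noteq> {}" "compact X" "convex X"
    and U: "U \<noteq> {}" "compact U" "convex U"
    and err: "\<And>x u. x \<in> X \<Longrightarrow> u \<in> U \<Longrightarrow> aff_dyn fx fu x u - aff_dyn fhx fhu x u \<in> E"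
    and pol: "\<And>x e. x \<in> X \<Longrightarrow> e \<in> E \<Longrightarrow> aff_pol px pe x e \<in> U"
  shows "\<forall>x\<in>X.
    (let S = {u \<in> U. u = px x + pe x *v (fx x - fhx x + (fu x - fhu x) *v u)} in
       S \<noteq> {}
     \<and> S = {u \<in> U. u = aff_pol px pe x (aff_dyn fx fu x u - aff_dyn fhx fhu x u)}
     \<and> convex S
     \<and> (polytope U \<longrightarrow> polyhedron S))"
proof
  fix x assume "x \<in> X"
  define c where "c = px x + pe x *v (fx x - fhx x)"
  define M where "M = pe x ** (fu x - fhu x)"
  have closed_loop: "aff_pol px pe x (aff_dyn fx fu x u - aff_dyn fhx fhu x u) = c + M *v u"
    and explicit: "px x + pe x *v (fx x - fhx x + (fu x - fhu x) *v u) = c + M *v u" for u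
    by (simp_all only: aff_pol_aff_dyn_diff matrix_affine_compose c_def M_def)
  have lin: "linear ((*v) M)"
    by (rule matrix_vector_mul_linear)
  have maps_to: "c + M *v u \<in> U" if "u \<in> U" for u
    using pol[OF \<open>x \<in> X\<close> err[OF \<open>x \<in> X\<close> that]] by (simp only: closed_loop)
  obtain u where "u \<in> U" "c + M *v u = u"
    using affine_self_map_has_fixpoint[OF U(2,3,1) lin maps_to] .
  moreover have "affine {u. c + M *v u = u}"
    using lin by (rule affine_fixpoints_affine_map)
  moreover have "{u \<in> U. u = c + M *v u} = U \<inter> {u. c + M *v u = u}"
    by auto
  ultimately show "let S = {u \<in> U. u = px x + pe x *v (fx x - fhx x + (fu x - fhu x) *v u)} in
       S \<noteq> {}
     \<and> S = {u \<in> U. u = aff_pol px pe x (aff_dyn fx fu x u - aff_dyn fhx fhu x u)}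
     \<and> convex S
     \<and> (polytope U \<longrightarrow> polyhedron S)"
    unfolding Let_def closed_loop explicit
    using U(3) by (auto intro: convex_Int affine_imp_convex affine_imp_polyhedron polytope_imp_polyhedron)
qed

end
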